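(* Let $\mu_1,\mu_2$ be probability measures on $[0,\infty)$ with mean $1$ such that $\Lambda_{\mu_1},\Lambda_{\mu_2}$ are finite on a neighborhood of $0$, and let $P$ be a probability measure. (1) If there is $r_0>0$ with $G_{\mu_1}(r)\ge G_{\mu_2}(r)$ for all $r\in[0,r_0]$ and $G_{\mu_1}(r)\le G_{\mu_2}(r)$ for all $r>r_0$, then $\mathcal{U}^{\mu_1}(P)\subset\mathcal{U}^{\mu_2}(P)$. (2) Let $I_2=\{\lambda>0:\int_0^\infty G_{\mu_2}(z)z^\lambda dz<\infty\}$. If $\lim_{R\to\infty}R^\lambda\int_R^\infty G_{\mu_2}(z)\,dz=0$ for all $\lambda\in I_2$, and $\int_0^rG_{\mu_2}(z)\,dz\le\int_0^rG_{\mu_1}(z)\,dz$ for all $r\ge0$, then $\mathcal{U}^{\mu_1}(P)\subset\mathcal{U}^{\mu_2}(P)$.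
   Context: For a probability measure $\mu$ on $[0,\infty)$ with mean $1$, $G_\mu(r)=\mu([r,\infty))$ for $r\ge0$ and $\Lambda_\mu(\lambda)=\log\big((\lambda+1)\int_0^\infty G_\mu(z)z^\lambda\,dz\big)$ for $\lambda\ge0$. With $\Lambda_Q^f(\lambda)=\log E_Q[e^{\lambda f}]$, and $\Lambda_\mu$ finite near $0$, $\mathcal{U}^\mu(P)=\{Q \text{ probability measure}: Q\ll P,\ \Lambda_Q^{\log(dQ/dP)}(\lambda)\le\Lambda_\mu(\lambda)\ \text{for all }\lambda>0\}$. *)

theory Defs
  imports "HOL-Probability.Probability"
begin

definition ereal_ln :: "ennreal \<Rightarrow> ereal" where
  "ereal_ln x = (if x = \<infinity> then \<infinity> else if x = 0 then -\<infinity> else ereal (ln (enn2real x)))"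

definition mean_one_prob :: "real measure \<Rightarrow> bool" where
  "mean_one_prob \<mu> \<longleftrightarrow> prob_space \<mu> \<and> sets \<mu> = sets borel \<and>
     emeasure \<mu> {..<0} = 0 \<and> integrable \<mu> (\<lambda>z. z) \<and> integral\<^sup>L \<mu> (\<lambda>z. z) = 1"

definition G :: "real measure \<Rightarrow> real \<Rightarrow> real" where
  "G \<mu> r = measure \<mu> {r..}"

definition Lambda_mu :: "real measure \<Rightarrow> real \<Rightarrow> ereal" where
  "Lambda_mu \<mu> l = ereal_ln (ennreal (l + 1) *
      (\<integral>\<^sup>+ z \<in> {0..}. ennreal (G \<mu> z * z powr l) \<partial>lborel))"

definition Lambda_Q :: "'a measure \<Rightarrow> ('a \<Rightarrow> real) \<Rightarrow> real \<Rightarrow> ereal" where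
  "Lambda_Q Q f l = ereal_ln (\<integral>\<^sup>+ x. ennreal (exp (l * f x)) \<partial>Q)"

definition U :: "real measure \<Rightarrow> 'a measure \<Rightarrow> 'a measure set" where
  "U \<mu> P = {Q. prob_space Q \<and> sets Q = sets P \<and> absolutely_continuous P Q \<and>
      (\<forall>l>0. Lambda_Q Q (\<lambda>x. ln (enn2real (RN_deriv P Q x))) l \<le> Lambda_mu \<mu> l)}"

end

theory Submission
  imports Defs
begin

text \<open>Let \<open>H\<^sub>\<mu>(r) = \<integral>\<^sub>r\<^sup>\<infinity> G\<^sub>\<mu>\<close> (\<open>G_tail\<close> below). Since \<open>\<integral>\<^sub>0\<^sup>\<infinity> G\<^sub>\<mu>\<close> is the mean of \<open>\<mu>\<close>,
  namely \<open>1\<close>, we have \<open>H\<^sub>\<mu>(r) = 1 - \<integral>\<^sub>0\<^sup>r G\<^sub>\<mu>\<close>; and by Fubini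
  \<open>\<integral>\<^sub>0\<^sup>\<infinity> G\<^sub>\<mu>(z) z\<^sup>\<lambda> dz = \<integral>\<^sub>0\<^sup>\<infinity> H\<^sub>\<mu>(s\<^sup>1\<^sup>/\<^sup>\<lambda>) ds\<close>. So if \<open>\<integral>\<^sub>0\<^sup>r G\<^sub>\<mu>\<^sub>2 \<le> \<integral>\<^sub>0\<^sup>r G\<^sub>\<mu>\<^sub>1\<close> for all \<open>r\<close>,
  then \<open>H\<^sub>\<mu>\<^sub>1 \<le> H\<^sub>\<mu>\<^sub>2\<close>, hence \<open>\<Lambda>\<^sub>\<mu>\<^sub>1 \<le> \<Lambda>\<^sub>\<mu>\<^sub>2\<close>, and the constraint defining \<open>\<U>\<^sup>\<mu>\<^sup>1(P)\<close> is
  stronger than the one defining \<open>\<U>\<^sup>\<mu>\<^sup>2(P)\<close>. This ordering of the partial integrals is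
  the hypothesis of (2); under the single crossing condition of (1) it holds pointwise
  below \<open>r\<^sub>0\<close>, and above \<open>r\<^sub>0\<close> because there the tails \<open>H\<close> are ordered pointwise.\<close>

lemma ereal_ln_mono: "x \<le> y \<Longrightarrow> ereal_ln x \<le> ereal_ln y"
  unfolding ereal_ln_def
  by (auto simp: enn2real_positive_iff top.extremum_unique less_top[symmetric]
      zero_less_iff_neq_zero intro!: ln_mono enn2real_mono dest: order.trans order_antisym)

lemma less_powr_iff_powr_inverse_less:
  fixes s z l :: real
  assumes "0 < l" "0 \<le> s" "0 \<le> z"
  shows "s < z powr l \<longleftrightarrow> s powr (1/l) < z"
proof
  assume "s < z powr l"
  then have "s powr (1/l) < (z powr l) powr (1/l)"
    using assms by (intro powr_less_mono2) auto
  then show "s powr (1/l) < z" using assms by (simp add: powr_powr)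
next
  assume "s powr (1/l) < z"
  then have "(s powr (1/l)) powr l < z powr l"
    using assms by (intro powr_less_mono2) auto
  then show "s < z powr l" using assms by (simp add: powr_powr)
qed

lemma nn_integral_powr_as_layers:
  fixes l z :: real
  assumes "0 < l" "0 \<le> z"
  shows "(\<integral>\<^sup>+ s. indicator {0..} s * indicator {s powr (1/l)<..} z \<partial>lborel) = ennreal (z powr l)"
proof -
  have "(\<integral>\<^sup>+ s. indicator {0..} s * indicator {s powr (1/l)<..} z \<partial>lborel)
      = (\<integral>\<^sup>+ s. indicator {0..<z powr l} s \<partial>lborel)"
    using assms
    by (intro nn_integral_cong) (auto simp: indicator_def less_powr_iff_powr_inverse_less)
  then show ?thesis by simp
qed

lemma G_nonneg: "0 \<le> G \<mu> r"
  unfolding G_def by simp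

lemma G_le_1:
  assumes "mean_one_prob \<mu>" shows "G \<mu> r \<le> 1"
proof -
  interpret prob_space \<mu> using assms unfolding mean_one_prob_def by auto
  show ?thesis unfolding G_def by simp
qed

lemma set_integral_G_nonneg: "0 \<le> (LINT z:A|M. G \<mu> z)"
  unfolding set_lebesgue_integral_def by (intro Bochner_Integration.integral_nonneg) (simp add: G_nonneg)

lemma borel_measurable_G [measurable]:
  assumes "mean_one_prob \<mu>" shows "G \<mu> \<in> borel_measurable borel"
proof -
  interpret prob_space \<mu> using assms unfolding mean_one_prob_def by auto
  have s: "sets \<mu> = sets borel" using assms unfolding mean_one_prob_def by auto
  have "mono (\<lambda>r. - G \<mu> r)"
    unfolding mono_def G_def by (auto intro!: finite_measure_mono simp: s)
  then have "(\<lambda>r. - (- G \<mu> r)) \<in> borel_measurable borel"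
    by (intro borel_measurable_uminus borel_measurable_mono)
  then show ?thesis by simp
qed

lemma set_integrable_G_Icc:
  assumes "mean_one_prob \<mu>" shows "set_integrable lborel {a..b} (G \<mu>)"
proof (rule set_integrable_bound[of _ _ "\<lambda>_. 1 :: real"])
  show "set_integrable lborel {a..b} (\<lambda>_. 1 :: real)"
    by (simp add: set_integrable_def integrable_real_indicator emeasure_lborel_Icc_eq)
  show "set_borel_measurable lborel {a..b} (G \<mu>)"
    using assms unfolding set_borel_measurable_def by measurable
  show "AE x in lborel. x \<in> {a..b} \<longrightarrow> norm (G \<mu> x) \<le> norm (1 :: real)"
    using G_nonneg[of \<mu>] G_le_1[OF assms] by auto
qed

lemma nn_integral_G_eq_nn_integral:
  assumes "prob_space \<mu>" and s: "sets \<mu> = sets borel"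
  shows "(\<integral>\<^sup>+ t. ennreal (G \<mu> t) * indicator {0..} t \<partial>lborel) = (\<integral>\<^sup>+ x. ennreal x \<partial>\<mu>)"
proof -
  interpret prob_space \<mu> by fact
  interpret pair_sigma_finite \<mu> lborel
    by (simp add: pair_sigma_finite_def lborel.sigma_finite_measure_axioms sigma_finite_measure_axioms)
  have meas: "(\<lambda>(x, t). indicator {0..x} t :: ennreal) \<in> borel_measurable (\<mu> \<Otimes>\<^sub>M lborel)"
  proof -
    have "(\<lambda>(x::real, t::real). indicator {0..x} t :: ennreal) \<in> borel_measurable (borel \<Otimes>\<^sub>M borel)"
      unfolding indicator_def atLeastAtMost_iff mem_Collect_eq by measurable
    then show ?thesis
      by (subst measurable_cong_sets[OF sets_pair_measure_cong[OF s sets_lborel] refl])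
  qed
  have "(\<integral>\<^sup>+ t. ennreal (G \<mu> t) * indicator {0..} t \<partial>lborel)
      = (\<integral>\<^sup>+ t. (\<integral>\<^sup>+ x. indicator {0..x} t \<partial>\<mu>) \<partial>lborel)"
  proof (rule nn_integral_cong)
    fix t :: real
    have "ennreal (G \<mu> t) * indicator {0..} t = (\<integral>\<^sup>+ x. indicator {t..} x \<partial>\<mu>) * indicator {0..} t"
      unfolding G_def by (subst nn_integral_indicator) (auto simp: s emeasure_eq_measure)
    also have "\<dots> = (\<integral>\<^sup>+ x. indicator {0..x} t \<partial>\<mu>)"
      by (subst nn_integral_multc[symmetric])
        (auto simp: s indicator_def intro!: nn_integral_cong borel_measurable_indicator)
    finally show "ennreal (G \<mu> t) * indicator {0..} t = (\<integral>\<^sup>+ x. indicator {0..x} t \<partial>\<mu>)" .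
  qed
  also have "\<dots> = (\<integral>\<^sup>+ x. (\<integral>\<^sup>+ t. indicator {0..x} t \<partial>lborel) \<partial>\<mu>)"
    using Fubini'[OF meas] by simp
  also have "\<dots> = (\<integral>\<^sup>+ x. ennreal x \<partial>\<mu>)"
  proof (rule nn_integral_cong)
    show "(\<integral>\<^sup>+ t. indicator {0..x} t \<partial>lborel) = ennreal x" for x :: real
      by (cases "0 \<le> x") (auto simp: ennreal_neg)
  qed
  finally show ?thesis .
qed

lemma nn_integral_G_eq_1:
  assumes m: "mean_one_prob \<mu>"
  shows "(\<integral>\<^sup>+ t. ennreal (G \<mu> t) * indicator {0..} t \<partial>lborel) = 1"
proof -
  have s: "sets \<mu> = sets borel" using m unfolding mean_one_prob_def by auto
  have "AE x in \<mu>. 0 \<le> x"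
    using m unfolding mean_one_prob_def by (intro AE_I[of _ _ "{..<0}"]) (auto simp: s)
  then have "(\<integral>\<^sup>+ x. ennreal x \<partial>\<mu>) = ennreal (integral\<^sup>L \<mu> (\<lambda>x. x))"
    using m unfolding mean_one_prob_def by (intro nn_integral_eq_integral) auto
  then show ?thesis
    using m nn_integral_G_eq_nn_integral[OF _ s] unfolding mean_one_prob_def by simp
qed

definition G_tail :: "real measure \<Rightarrow> real \<Rightarrow> ennreal" where
  "G_tail \<mu> r = (\<integral>\<^sup>+ t. ennreal (G \<mu> t) * indicator {r<..} t \<partial>lborel)"

lemma G_tail_mono_G:
  assumes "\<And>t. r < t \<Longrightarrow> G \<mu>1 t \<le> G \<mu>2 t"
  shows "G_tail \<mu>1 r \<le> G_tail \<mu>2 r"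
  unfolding G_tail_def
  using assms by (intro nn_integral_mono) (auto simp: indicator_def intro!: ennreal_leI)

lemma partial_integral_G_add_G_tail:
  assumes m: "mean_one_prob \<mu>" and r: "0 \<le> r"
  shows "ennreal (LINT z:{0..r}|lborel. G \<mu> z) + G_tail \<mu> r = 1"
proof -
  have "integrable lborel (\<lambda>t. indicator {0..r} t *\<^sub>R G \<mu> t)"
    using set_integrable_G_Icc[OF m] unfolding set_integrable_def .
  then have head: "(\<integral>\<^sup>+ t. ennreal (G \<mu> t) * indicator {0..r} t \<partial>lborel)
      = ennreal (LINT z:{0..r}|lborel. G \<mu> z)"
    unfolding set_lebesgue_integral_def
    by (subst nn_integral_eq_integral[symmetric])
      (auto simp: G_nonneg indicator_def intro!: nn_integral_cong)
  have "(\<integral>\<^sup>+ t. ennreal (G \<mu> t) * indicator {0..r} t \<partial>lborel) + G_tail \<mu> r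
      = (\<integral>\<^sup>+ t. ennreal (G \<mu> t) * indicator {0..r} t + ennreal (G \<mu> t) * indicator {r<..} t \<partial>lborel)"
    unfolding G_tail_def using m by (subst nn_integral_add) auto
  also have "\<dots> = (\<integral>\<^sup>+ t. ennreal (G \<mu> t) * indicator {0..} t \<partial>lborel)"
    using r by (intro nn_integral_cong) (auto simp: indicator_def)
  finally show ?thesis
    unfolding head nn_integral_G_eq_1[OF m] .
qed

lemma G_tail_eq:
  assumes "mean_one_prob \<mu>" and "0 \<le> r"
  shows "G_tail \<mu> r = ennreal (1 - (LINT z:{0..r}|lborel. G \<mu> z))"
    and "(LINT z:{0..r}|lborel. G \<mu> z) \<le> 1"
proof -
  note sum = partial_integral_G_add_G_tail[OF assms]
  then show le: "(LINT z:{0..r}|lborel. G \<mu> z) \<le> 1"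
    by (metis ennreal_le_1 le_iff_add)
  from sum have "G_tail \<mu> r = ennreal 1 - ennreal (LINT z:{0..r}|lborel. G \<mu> z)"
    by (metis ennreal_1 ennreal_add_diff_cancel_left ennreal_neq_top)
  then show "G_tail \<mu> r = ennreal (1 - (LINT z:{0..r}|lborel. G \<mu> z))"
    by (metis ennreal_minus set_integral_G_nonneg)
qed

lemma G_tail_le_iff_partial_integral_ge:
  assumes "mean_one_prob \<mu>1" and "mean_one_prob \<mu>2" and "0 \<le> r"
  shows "G_tail \<mu>1 r \<le> G_tail \<mu>2 r
    \<longleftrightarrow> (LINT z:{0..r}|lborel. G \<mu>2 z) \<le> (LINT z:{0..r}|lborel. G \<mu>1 z)"
  using G_tail_eq[OF assms(1,3)] G_tail_eq[OF assms(2,3)] by (simp add: ennreal_le_iff)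

lemma moment_G_eq_nn_integral_G_tail:
  assumes m: "mean_one_prob \<mu>" and l: "0 < l"
  shows "(\<integral>\<^sup>+ z \<in> {0..}. ennreal (G \<mu> z * z powr l) \<partial>lborel)
       = (\<integral>\<^sup>+ s. G_tail \<mu> (s powr (1/l)) * indicator {0..} s \<partial>lborel)"
proof -
  define F where "F z s = ennreal (G \<mu> z) * indicator {0..} z
      * (indicator {0..} s * indicator {s powr (1/l)<..} z)" for z s :: real
  have "(\<integral>\<^sup>+ z \<in> {0..}. ennreal (G \<mu> z * z powr l) \<partial>lborel)
      = (\<integral>\<^sup>+ z. (\<integral>\<^sup>+ s. F z s \<partial>lborel) \<partial>lborel)"
  proof (rule nn_integral_cong)
    fix z :: real
    have "(\<lambda>s. indicator {0..} s * indicator {s powr (1 / l)<..} z :: ennreal)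
        \<in> borel_measurable borel"
      unfolding indicator_def atLeast_iff greaterThan_iff by measurable
    then show "ennreal (G \<mu> z * z powr l) * indicator {0..} z = (\<integral>\<^sup>+ s. F z s \<partial>lborel)"
      unfolding F_def using nn_integral_powr_as_layers[OF l, of z]
      by (cases "0 \<le> z") (auto simp: nn_integral_cmult ennreal_mult G_nonneg mult_ac)
  qed
  also have "\<dots> = (\<integral>\<^sup>+ s. (\<integral>\<^sup>+ z. F z s \<partial>lborel) \<partial>lborel)"
  proof (rule lborel_pair.Fubini'[symmetric])
    show "case_prod F \<in> borel_measurable (lborel \<Otimes>\<^sub>M lborel)"
      unfolding F_def indicator_def atLeast_iff greaterThan_iff using m by measurable
  qed
  also have "\<dots> = (\<integral>\<^sup>+ s. G_tail \<mu> (s powr (1/l)) * indicator {0..} s \<partial>lborel)"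
  proof (rule nn_integral_cong)
    fix s :: real
    have "(\<integral>\<^sup>+ z. F z s \<partial>lborel)
        = (\<integral>\<^sup>+ z. ennreal (G \<mu> z) * indicator {s powr (1/l)<..} z * indicator {0..} s \<partial>lborel)"
      unfolding F_def
      by (intro nn_integral_cong)
        (auto simp: indicator_def dest: order.strict_trans1[OF powr_ge_zero[of s "1/l"]])
    also have "\<dots> = G_tail \<mu> (s powr (1/l)) * indicator {0..} s"
      unfolding G_tail_def using m by (subst nn_integral_multc) auto
    finally show "(\<integral>\<^sup>+ z. F z s \<partial>lborel) = G_tail \<mu> (s powr (1/l)) * indicator {0..} s" .
  qed
  finally show ?thesis .
qed

lemma U_mono:
  assumes "\<And>l. 0 < l \<Longrightarrow> Lambda_mu \<mu>1 l \<le> Lambda_mu \<mu>2 l"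
  shows "U \<mu>1 P \<subseteq> U \<mu>2 P"
  unfolding U_def using assms by (auto intro: order.trans)

lemma Lambda_mu_mono_G_tail:
  assumes m1: "mean_one_prob \<mu>1" and m2: "mean_one_prob \<mu>2" and l: "0 < l"
    and tail: "\<And>r. 0 \<le> r \<Longrightarrow> G_tail \<mu>1 r \<le> G_tail \<mu>2 r"
  shows "Lambda_mu \<mu>1 l \<le> Lambda_mu \<mu>2 l"
proof -
  have "(\<integral>\<^sup>+ z \<in> {0..}. ennreal (G \<mu>1 z * z powr l) \<partial>lborel)
      \<le> (\<integral>\<^sup>+ z \<in> {0..}. ennreal (G \<mu>2 z * z powr l) \<partial>lborel)"
    unfolding moment_G_eq_nn_integral_G_tail[OF m1 l] moment_G_eq_nn_integral_G_tail[OF m2 l]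
    by (intro nn_integral_mono) (auto simp: indicator_def intro!: tail)
  then show ?thesis
    unfolding Lambda_mu_def by (intro ereal_ln_mono mult_left_mono) auto
qed

lemma U_subset_if_partial_integrals_le:
  assumes m1: "mean_one_prob \<mu>1" and m2: "mean_one_prob \<mu>2"
    and le: "\<And>r. 0 \<le> r \<Longrightarrow> (LINT z:{0..r}|lborel. G \<mu>2 z) \<le> (LINT z:{0..r}|lborel. G \<mu>1 z)"
  shows "U \<mu>1 P \<subseteq> U \<mu>2 P"
proof (intro U_mono Lambda_mu_mono_G_tail[OF m1 m2])
  fix r :: real assume "0 \<le> r"
  then show "G_tail \<mu>1 r \<le> G_tail \<mu>2 r"
    using G_tail_le_iff_partial_integral_ge[OF m1 m2] le by blast
qed

lemma partial_integrals_le_if_single_crossing: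
  assumes m1: "mean_one_prob \<mu>1" and m2: "mean_one_prob \<mu>2"
    and below: "\<And>r. r \<in> {0..r0} \<Longrightarrow> G \<mu>2 r \<le> G \<mu>1 r"
    and above: "\<And>r. r0 < r \<Longrightarrow> G \<mu>1 r \<le> G \<mu>2 r"
    and r: "0 \<le> r"
  shows "(LINT z:{0..r}|lborel. G \<mu>2 z) \<le> (LINT z:{0..r}|lborel. G \<mu>1 z)"
proof (cases "r \<le> r0")
  case True
  then show ?thesis
    by (intro set_integral_mono set_integrable_G_Icc m1 m2 below) auto
next
  case False
  then have "G_tail \<mu>1 r \<le> G_tail \<mu>2 r"
    by (intro G_tail_mono_G above) auto
  then show ?thesis
    using G_tail_le_iff_partial_integral_ge[OF m1 m2 r] by blast
qed

theorem mainTheorem7: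
  fixes \<mu>1 \<mu>2 :: "real measure" and P :: "'a measure"
  assumes "mean_one_prob \<mu>1" and "mean_one_prob \<mu>2"
    and "\<exists>e>0. \<forall>l\<in>{0..<e}. \<bar>Lambda_mu \<mu>1 l\<bar> \<noteq> \<infinity>"
    and "\<exists>e>0. \<forall>l\<in>{0..<e}. \<bar>Lambda_mu \<mu>2 l\<bar> \<noteq> \<infinity>"
    and "prob_space P"
  shows "((\<exists>r0>0. (\<forall>r\<in>{0..r0}. G \<mu>1 r \<ge> G \<mu>2 r) \<and> (\<forall>r>r0. G \<mu>1 r \<le> G \<mu>2 r))
            \<longrightarrow> U \<mu>1 P \<subseteq> U \<mu>2 P)
       \<and> ((\<forall>l\<in>{l. l > 0 \<and> (\<integral>\<^sup>+ z \<in> {0..}. ennreal (G \<mu>2 z * z powr l) \<partial>lborel) < \<infinity>}.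
              ((\<lambda>R. R powr l * (LINT z:{R..}|lborel. G \<mu>2 z)) \<longlongrightarrow> 0) at_top)
           \<and> (\<forall>r\<ge>0. (LINT z:{0..r}|lborel. G \<mu>2 z) \<le> (LINT z:{0..r}|lborel. G \<mu>1 z))
            \<longrightarrow> U \<mu>1 P \<subseteq> U \<mu>2 P)"
proof (intro conjI impI)
  assume "\<exists>r0>0. (\<forall>r\<in>{0..r0}. G \<mu>1 r \<ge> G \<mu>2 r) \<and> (\<forall>r>r0. G \<mu>1 r \<le> G \<mu>2 r)"
  then obtain r0 where "\<And>r. r \<in> {0..r0} \<Longrightarrow> G \<mu>2 r \<le> G \<mu>1 r" "\<And>r. r0 < r \<Longrightarrow> G \<mu>1 r \<le> G \<mu>2 r"
    by blast
  then show "U \<mu>1 P \<subseteq> U \<mu>2 P"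
    using assms(1,2)
    by (intro U_subset_if_partial_integrals_le partial_integrals_le_if_single_crossing)
next
  assume "(\<forall>l\<in>{l. l > 0 \<and> (\<integral>\<^sup>+ z \<in> {0..}. ennreal (G \<mu>2 z * z powr l) \<partial>lborel) < \<infinity>}.
              ((\<lambda>R. R powr l * (LINT z:{R..}|lborel. G \<mu>2 z)) \<longlongrightarrow> 0) at_top)
           \<and> (\<forall>r\<ge>0. (LINT z:{0..r}|lborel. G \<mu>2 z) \<le> (LINT z:{0..r}|lborel. G \<mu>1 z))"
  then show "U \<mu>1 P \<subseteq> U \<mu>2 P"
    using assms(1,2) by (intro U_subset_if_partial_integrals_le) auto
qed

end
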